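(* If $X$ is path connected and $\pi_1^{\tau}(X)$ is Hausdorff, then $X$ is homotopically path-Hausdorff.
   Context: A space $X$ is homotopically path-Hausdorff if for any paths $\alpha,\beta:[0,1]\to X$ with $\alpha(0)=\beta(0)$, $\alpha(1)=\beta(1)$ which are not homotopic rel. endpoints, there exist a partition $0=t_0<t_1<\dots<t_k=1$ and open sets $U_1,\dots,U_k\subseteq X$ with $\alpha([t_{i-1},t_i])\subseteq U_i$ such that every path $\gamma:[0,1]\to X$ with $\gamma(t_i)=\alpha(t_i)$ for $i=0,\dots,k$ and $\gamma([t_{i-1},t_i])\subseteq U_i$ for $i=1,\dots,k$ is not homotopic to $\beta$ rel. endpoints. $\pi_1^{qtop}(X,x)$ is $\pi_1(X,x)$ with the quotient topology from the loop space $\Omega(X,x)$ (compact-open topology) via $\alpha\mapsto[\alpha]$. $F_M(S)$ is the free (Markov) topological group on a space $S$. For a group with topology $G$, $\tau(G)$ is $G$ with the quotient topology with respect to the multiplication epimorphism $m_G:F_M(G)\to G$ (generator $g\mapsto g$). $\pi_1^{\tau}=\tau\circ\pi_1^{qtop}$ (its isomorphism type does not depend on the basepoint for path connected $X$). *)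

theory Defs
  imports "HOL-Analysis.Analysis" "HOL-Algebra.Group"
begin

definition phomotopic :: "'a topology \<Rightarrow> (real \<Rightarrow> 'a) \<Rightarrow> (real \<Rightarrow> 'a) \<Rightarrow> bool" where
  "phomotopic X p q \<longleftrightarrow>
     homotopic_with (\<lambda>h. h 0 = p 0 \<and> h 1 = p 1) (top_of_set {0..1}) X p q"

definition path_concat :: "(real \<Rightarrow> 'a) \<Rightarrow> (real \<Rightarrow> 'a) \<Rightarrow> real \<Rightarrow> 'a" where
  "path_concat p q = (\<lambda>t. if t \<le> 1/2 then p (2 * t) else q (2 * t - 1))"

definition homotopically_path_Hausdorff :: "'a topology \<Rightarrow> bool" where
  "homotopically_path_Hausdorff X \<longleftrightarrow>
    (\<forall>\<alpha> \<beta>. pathin X \<alpha> \<and> pathin X \<beta> \<and> \<alpha> 0 = \<beta> 0 \<and> \<alpha> 1 = \<beta> 1 \<and> \<not> phomotopic X \<alpha> \<beta> \<longrightarrow>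
      (\<exists>(k::nat) (t::nat \<Rightarrow> real) (U::nat \<Rightarrow> 'a set).
         1 \<le> k \<and> t 0 = 0 \<and> t k = 1 \<and>
         (\<forall>i\<in>{1..k}. t (i - 1) < t i \<and> openin X (U i) \<and> \<alpha> ` {t (i - 1)..t i} \<subseteq> U i) \<and>
         (\<forall>\<gamma>. pathin X \<gamma> \<and> (\<forall>i\<le>k. \<gamma> (t i) = \<alpha> (t i)) \<and>
                (\<forall>i\<in>{1..k}. \<gamma> ` {t (i - 1)..t i} \<subseteq> U i)
              \<longrightarrow> \<not> phomotopic X \<gamma> \<beta>)))"

definition loop_space_set :: "'a topology \<Rightarrow> 'a \<Rightarrow> (real \<Rightarrow> 'a) set" where
  "loop_space_set X x = {\<alpha>. pathin X \<alpha> \<and> \<alpha> 0 = x \<and> \<alpha> 1 = x}"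

text \<open>Compact-open topology: generated by the sets of loops mapping a compact
  \<open>K \<subseteq> [0,1]\<close> into an open \<open>U \<subseteq> X\<close> (with \<open>K = {}\<close> giving the whole loop space).\<close>
definition loop_space :: "'a topology \<Rightarrow> 'a \<Rightarrow> (real \<Rightarrow> 'a) topology" where
  "loop_space X x = topology_generated_by
     {{\<alpha> \<in> loop_space_set X x. \<alpha> ` K \<subseteq> U} | K U.
        compactin (top_of_set {0..1}) K \<and> openin X U}"

definition quotient_topology :: "'a topology \<Rightarrow> ('a \<Rightarrow> 'b) \<Rightarrow> 'b set \<Rightarrow> 'b topology" where
  "quotient_topology T f Y = topology (\<lambda>U. U \<subseteq> Y \<and> openin T {z \<in> topspace T. f z \<in> U})"

definition pclass :: "'a topology \<Rightarrow> 'a \<Rightarrow> (real \<Rightarrow> 'a) \<Rightarrow> (real \<Rightarrow> 'a) set" where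
  "pclass X x \<alpha> = {\<beta> \<in> loop_space_set X x. phomotopic X \<alpha> \<beta>}"

definition fundamental_group :: "'a topology \<Rightarrow> 'a \<Rightarrow> (real \<Rightarrow> 'a) set monoid" where
  "fundamental_group X x =
     \<lparr>carrier = pclass X x ` loop_space_set X x,
      mult = (\<lambda>A B. pclass X x (path_concat (SOME a. a \<in> A) (SOME b. b \<in> B))),
      one = pclass X x (\<lambda>t. x)\<rparr>"

definition pi1_qtop :: "'a topology \<Rightarrow> 'a \<Rightarrow> (real \<Rightarrow> 'a) set topology" where
  "pi1_qtop X x = quotient_topology (loop_space X x) (pclass X x) (carrier (fundamental_group X x))"

text \<open>Free group on a set \<open>S\<close>: reduced words over letters \<open>(s, True)\<close> = \<open>s\<close>
  and \<open>(s, False)\<close> = \<open>s\<inverse>\<close>.\<close>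
fun word_reduce :: "('g \<times> bool) list \<Rightarrow> ('g \<times> bool) list" where
  "word_reduce [] = []"
| "word_reduce (x # xs) =
     (case word_reduce xs of
        [] \<Rightarrow> [x]
      | y # ys \<Rightarrow> (if fst y = fst x \<and> snd y \<noteq> snd x then ys else x # y # ys))"

definition free_group :: "'g set \<Rightarrow> ('g \<times> bool) list monoid" where
  "free_group S =
     \<lparr>carrier = {w. fst ` set w \<subseteq> S \<and> word_reduce w = w},
      mult = (\<lambda>v w. word_reduce (v @ w)),
      one = []\<rparr>"

definition group_topology :: "('g, 'b) monoid_scheme \<Rightarrow> 'g topology \<Rightarrow> bool" where
  "group_topology G T \<longleftrightarrow>
     topspace T = carrier G \<and>
     continuous_map (prod_topology T T) T (\<lambda>(a, b). a \<otimes>\<^bsub>G\<^esub> b) \<and>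
     continuous_map T T (\<lambda>a. inv\<^bsub>G\<^esub> a)"

text \<open>Markov free topological group \<open>F_M(S)\<close>: the finest group topology on the
  free group on \<open>topspace S\<close> making the generator inclusion continuous (the
  supremum of all such group topologies).\<close>
definition free_top_group_topology :: "'g topology \<Rightarrow> ('g \<times> bool) list topology" where
  "free_top_group_topology S = topology_generated_by
     (\<Union>{{U. openin T U} | T.
         group_topology (free_group (topspace S)) T \<and>
         continuous_map S T (\<lambda>s. [(s, True)])})"

definition word_eval :: "('g, 'b) monoid_scheme \<Rightarrow> ('g \<times> bool) list \<Rightarrow> 'g" where
  "word_eval G w =
     foldr (\<lambda>(g, b) acc. (if b then g else inv\<^bsub>G\<^esub> g) \<otimes>\<^bsub>G\<^esub> acc) w \<one>\<^bsub>G\<^esub>"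

text \<open>\<open>\<tau>(G)\<close>: quotient topology on \<open>G\<close> w.r.t. \<open>m_G : F_M(G) \<rightarrow> G\<close>, where
  \<open>T\<close> is the given topology of \<open>G\<close>.\<close>
definition tau_topology :: "('g, 'b) monoid_scheme \<Rightarrow> 'g topology \<Rightarrow> 'g topology" where
  "tau_topology G T = quotient_topology (free_top_group_topology T) (word_eval G) (carrier G)"

definition pi1_tau :: "'a topology \<Rightarrow> 'a \<Rightarrow> (real \<Rightarrow> 'a) set topology" where
  "pi1_tau X x = tau_topology (fundamental_group X x) (pi1_qtop X x)"

end

theory Submission
  imports Defs
begin

(* Let \<alpha>, \<beta> be non-homotopic paths with common endpoints and \<delta> a path from the base
   point x0 to \<alpha>(0).  The conjugated loop L(\<gamma>) = \<delta>\<cdot>\<gamma>\<cdot>\<beta>\<^sup>-\<cdot>\<delta>\<^sup>- is null-homotopic iff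
   \<gamma> \<simeq> \<beta>, so [L(\<alpha>)] \<noteq> 1 in \<pi>\<^sub>1.  The topology of \<pi>\<^sub>1\<^sup>\<tau> is finer than the quotient
   topology of the loop space, so Hausdorffness yields an open set N of the loop space
   containing L(\<alpha>) but no null-homotopic loop.  N contains a finite intersection of
   compact-open subbasic sets around L(\<alpha>); only the middle quarter of L(\<gamma>) depends on
   \<gamma>, and a Lebesgue-number argument turns these conditions into a uniform partition of
   [0,1] with open sets U\<^sub>i along \<alpha> such that every \<gamma> following \<alpha> through the U\<^sub>i has
   L(\<gamma>) \<in> N, hence \<gamma> \<not>\<simeq> \<beta>. *)

section \<open>Free groups on reduced words\<close>

definition reduce_cons :: "('g \<times> bool) \<Rightarrow> ('g \<times> bool) list \<Rightarrow> ('g \<times> bool) list" where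
  "reduce_cons x ys = (case ys of [] \<Rightarrow> [x]
      | y # ys' \<Rightarrow> (if fst y = fst x \<and> snd y \<noteq> snd x then ys' else x # y # ys'))"

fun reduced :: "('g \<times> bool) list \<Rightarrow> bool" where
  "reduced [] = True"
| "reduced [x] = True"
| "reduced (x # y # ys) = (\<not> (fst y = fst x \<and> snd y \<noteq> snd x) \<and> reduced (y # ys))"

lemma word_reduce_Cons: "word_reduce (x # xs) = reduce_cons x (word_reduce xs)"
  by (simp add: reduce_cons_def)

declare word_reduce.simps(2)[simp del]

lemma reduced_tl: "reduced (x # xs) \<Longrightarrow> reduced xs"
  by (cases xs) auto

lemma reduced_reduce_cons: "reduced ys \<Longrightarrow> reduced (reduce_cons x ys)"
  by (cases ys rule: reduced.cases) (auto simp: reduce_cons_def)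

lemma reduced_word_reduce: "reduced (word_reduce w)"
  by (induction w) (auto simp: word_reduce_Cons reduced_reduce_cons)

lemma word_reduce_reduced: "reduced w \<Longrightarrow> word_reduce w = w"
proof (induction w)
  case (Cons x xs)
  then have "word_reduce xs = xs" using reduced_tl by blast
  then show ?case using Cons.prems
    by (cases xs) (auto simp: word_reduce_Cons reduce_cons_def)
qed simp

lemma word_reduce_idem: "word_reduce (word_reduce w) = word_reduce w"
  by (simp add: word_reduce_reduced reduced_word_reduce)

lemma word_reduce_append: "word_reduce (u @ v) = foldr reduce_cons u (word_reduce v)"
  by (induction u) (auto simp: word_reduce_Cons)

lemma reduced_foldr: "reduced z \<Longrightarrow> reduced (foldr reduce_cons u z)"
  by (induction u) (auto simp: reduced_reduce_cons)

lemma reduce_cons_cancel: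
  assumes "reduced q" shows "reduce_cons x (reduce_cons (fst x, \<not> snd x) q) = q"
proof (cases q)
  case (Cons y ys)
  show ?thesis
  proof (cases "y = x")
    case True
    then have "reduce_cons (fst x, \<not> snd x) q = ys" using Cons by (simp add: reduce_cons_def)
    moreover have "reduce_cons x ys = x # ys" using assms Cons True
      by (cases ys) (auto simp: reduce_cons_def)
    ultimately show ?thesis using Cons True by simp
  next
    case False
    then have "reduce_cons (fst x, \<not> snd x) q = (fst x, \<not> snd x) # q" using Cons
      by (auto simp: reduce_cons_def prod_eq_iff)
    then show ?thesis by (simp add: reduce_cons_def)
  qed
qed (simp add: reduce_cons_def)

lemma foldr_reduce_cons_reduce_cons:
  assumes "reduced r" "reduced z"
  shows "foldr reduce_cons (reduce_cons x r) z = reduce_cons x (foldr reduce_cons r z)"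
proof (cases r)
  case (Cons y ys)
  show ?thesis
  proof (cases "fst y = fst x \<and> snd y \<noteq> snd x")
    case True
    then have "y = (fst x, \<not> snd x)" by (simp add: prod_eq_iff)
    moreover have "reduce_cons x r = ys" using Cons True by (simp add: reduce_cons_def)
    ultimately show ?thesis
      using Cons reduce_cons_cancel[OF reduced_foldr[OF assms(2)], of x ys] by simp
  next
    case False
    then have "reduce_cons x r = x # r" using Cons by (simp add: reduce_cons_def)
    then show ?thesis by simp
  qed
qed (simp add: reduce_cons_def)

lemma foldr_word_reduce:
  "reduced z \<Longrightarrow> foldr reduce_cons u z = foldr reduce_cons (word_reduce u) z"
  by (induction u)
    (simp_all add: word_reduce_Cons foldr_reduce_cons_reduce_cons reduced_word_reduce)

lemma word_reduce_assoc:
  "word_reduce (word_reduce (u @ v) @ w) = word_reduce (u @ word_reduce (v @ w))"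
proof -
  have "word_reduce (word_reduce (u @ v) @ w) =
        foldr reduce_cons (word_reduce (u @ v)) (word_reduce w)"
    by (simp add: word_reduce_append)
  also have "\<dots> = foldr reduce_cons (u @ v) (word_reduce w)"
    using foldr_word_reduce[OF reduced_word_reduce] by metis
  also have "\<dots> = foldr reduce_cons u (word_reduce (v @ w))"
    by (simp add: word_reduce_append)
  also have "\<dots> = word_reduce (u @ word_reduce (v @ w))"
    by (simp only: word_reduce_append[of u "word_reduce (v @ w)"] word_reduce_idem)
  finally show ?thesis .
qed

lemma fst_set_word_reduce: "fst ` set (word_reduce w) \<subseteq> fst ` set w"
proof (induction w)
  case (Cons x w)
  have "fst ` set (reduce_cons x ys) \<subseteq> insert (fst x) (fst ` set ys)" for ys
    by (auto simp: reduce_cons_def split: list.splits if_splits)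
  then have "fst ` set (word_reduce (x # w)) \<subseteq> insert (fst x) (fst ` set (word_reduce w))"
    by (simp add: word_reduce_Cons)
  also have "\<dots> \<subseteq> fst ` set (x # w)" using Cons.IH by auto
  finally show ?case .
qed simp

definition word_inv :: "('g \<times> bool) list \<Rightarrow> ('g \<times> bool) list" where
  "word_inv w = rev (map (\<lambda>x. (fst x, \<not> snd x)) w)"

lemma foldr_word_inv: "reduced w \<Longrightarrow> foldr reduce_cons (word_inv w) w = []"
proof (induction w)
  case (Cons x w)
  then have "reduced w" using reduced_tl by blast
  moreover have "reduce_cons (fst x, \<not> snd x) (x # w) = w"
    using Cons.prems by (cases w) (auto simp: reduce_cons_def)
  ultimately show ?case using Cons.IH by (simp add: word_inv_def)
qed (simp add: word_inv_def)

lemma group_free_group: "group (free_group S)"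
proof (rule groupI)
  fix x y assume "x \<in> carrier (free_group S)" "y \<in> carrier (free_group S)"
  then have "fst ` set (x @ y) \<subseteq> S" by (simp add: free_group_def image_Un)
  then have "fst ` set (word_reduce (x @ y)) \<subseteq> S"
    using fst_set_word_reduce[of "x @ y"] by (rule order_trans[rotated])
  then show "x \<otimes>\<^bsub>free_group S\<^esub> y \<in> carrier (free_group S)"
    by (simp add: free_group_def word_reduce_idem)
next
  fix x y z assume "x \<in> carrier (free_group S)" "y \<in> carrier (free_group S)"
    "z \<in> carrier (free_group S)"
  then show "x \<otimes>\<^bsub>free_group S\<^esub> y \<otimes>\<^bsub>free_group S\<^esub> z =
             x \<otimes>\<^bsub>free_group S\<^esub> (y \<otimes>\<^bsub>free_group S\<^esub> z)"
    by (simp add: free_group_def word_reduce_assoc)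
next
  fix x assume x: "x \<in> carrier (free_group S)"
  then have "reduced x" using reduced_word_reduce[of x] by (simp add: free_group_def)
  have "fst ` set (word_inv x) \<subseteq> S"
    using x by (auto simp: free_group_def word_inv_def image_image)
  then have "fst ` set (word_reduce (word_inv x)) \<subseteq> S"
    using fst_set_word_reduce[of "word_inv x"] by (rule order_trans[rotated])
  then have "word_reduce (word_inv x) \<in> carrier (free_group S)"
    by (simp add: free_group_def word_reduce_idem)
  moreover have "word_reduce (word_reduce (word_inv x) @ x) = []"
    using foldr_word_inv[OF \<open>reduced x\<close>] foldr_word_reduce[OF \<open>reduced x\<close>, of "word_inv x"]
      word_reduce_reduced[OF \<open>reduced x\<close>]
    by (simp add: word_reduce_append)
  ultimately show "\<exists>y\<in>carrier (free_group S). y \<otimes>\<^bsub>free_group S\<^esub> x = \<one>\<^bsub>free_group S\<^esub>"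
    unfolding free_group_def by (intro bexI) simp_all
qed (simp_all add: free_group_def)

section \<open>Paths and homotopy rel. endpoints in a topological space\<close>

abbreviation I01 :: "real topology" where
  "I01 \<equiv> top_of_set {0..1}"

definition path_reverse :: "(real \<Rightarrow> 'a) \<Rightarrow> real \<Rightarrow> 'a" where
  "path_reverse p = (\<lambda>t. p (1 - t))"

lemma path_concat_0 [simp]: "path_concat p q 0 = p 0"
  and path_concat_1 [simp]: "path_concat p q 1 = q 1"
  by (simp_all add: path_concat_def)

lemma path_reverse_0 [simp]: "path_reverse p 0 = p 1"
  and path_reverse_1 [simp]: "path_reverse p 1 = p 0"
  and path_reverse_reverse [simp]: "path_reverse (path_reverse p) = p"
  by (simp_all add: path_reverse_def)

lemma pathin_reverse: "pathin X p \<Longrightarrow> pathin X (path_reverse p)"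
proof -
  assume p: "pathin X p"
  have "continuous_map I01 I01 (\<lambda>t. 1 - t)"
    by (auto simp: continuous_map_in_subtopology intro!: continuous_intros)
  then have "continuous_map I01 X (p \<circ> (\<lambda>t. 1 - t))"
    by (rule continuous_map_compose[OF _ p[unfolded pathin_def]])
  then show ?thesis by (simp add: pathin_def path_reverse_def o_def)
qed

lemma phomotopic_imp_pathin:
  assumes "phomotopic X p q"
  shows "pathin X p" "pathin X q" "p 0 = q 0" "p 1 = q 1"
proof -
  have h: "homotopic_with (\<lambda>h. h 0 = p 0 \<and> h 1 = p 1) I01 X p q"
    using assms by (simp add: phomotopic_def)
  show "pathin X p" "pathin X q" using homotopic_with_imp_continuous_maps[OF h]
    by (auto simp: pathin_def)
  show "p 0 = q 0" "p 1 = q 1" using homotopic_with_imp_property[OF h] by auto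
qed

lemma phomotopic_refl: "pathin X p \<Longrightarrow> phomotopic X p p"
  by (simp add: phomotopic_def pathin_def)

lemma phomotopic_sym: assumes "phomotopic X p q" shows "phomotopic X q p"
proof -
  have e: "q 0 = p 0" "q 1 = p 1" using phomotopic_imp_pathin[OF assms] by auto
  show ?thesis using assms homotopic_with_sym unfolding phomotopic_def e by blast
qed

lemma phomotopic_trans [trans]:
  assumes "phomotopic X p q" "phomotopic X q r" shows "phomotopic X p r"
proof -
  have e: "q 0 = p 0" "q 1 = p 1" using phomotopic_imp_pathin[OF assms(1)] by auto
  show ?thesis using assms homotopic_with_trans unfolding phomotopic_def e by blast
qed

lemma phomotopic_cong:
  assumes "phomotopic X p q" "\<And>t. t \<in> {0..1} \<Longrightarrow> p' t = p t" "\<And>t. t \<in> {0..1} \<Longrightarrow> q' t = q t"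
  shows "phomotopic X p' q'"
proof -
  have e: "p' 0 = p 0" "p' 1 = p 1" using assms(2) by auto
  show ?thesis using assms(1) unfolding phomotopic_def e
    by (rule homotopic_with_eq) (use assms in auto)
qed

text \<open>Two reparametrisations of a path with the same endpoints are homotopic: the
  straight-line homotopy between the parameter maps stays inside \<open>[0,1]\<close>.\<close>
lemma phomotopic_reparam:
  assumes p: "pathin X p"
    and f: "continuous_on {0..1} f" "f ` {0..1} \<subseteq> {0..1}"
    and g: "continuous_on {0..1} g" "g ` {0..1} \<subseteq> {0..1}"
    and e: "f 0 = g 0" "f 1 = g 1"
  shows "phomotopic X (p \<circ> f) (p \<circ> g)"
proof -
  let ?H = "\<lambda>z::real\<times>real. (1 - fst z) * f (snd z) + fst z * g (snd z)"
  have cf: "continuous_map I01 euclideanreal f" "continuous_map I01 euclideanreal g"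
    using f g by auto
  have "continuous_map (prod_topology I01 I01) euclideanreal ?H"
    by (intro continuous_intros continuous_map_compose[OF continuous_map_snd cf(1), unfolded o_def]
        continuous_map_compose[OF continuous_map_snd cf(2), unfolded o_def]
        continuous_map_compose[OF continuous_map_fst continuous_map_from_subtopology[OF continuous_map_id], unfolded o_def id_def])
  moreover have "?H z \<in> {0..1}" if "z \<in> topspace (prod_topology I01 I01)" for z
  proof -
    have s: "fst z \<in> {0..1}" "snd z \<in> {0..1}" using that by auto
    then have "f (snd z) \<in> {0..1}" "g (snd z) \<in> {0..1}" using f(2) g(2) by blast+
    then show ?thesis using s convex_bound_le[of "f (snd z)" 1 "g (snd z)" "1 - fst z" "fst z"]
      by auto
  qed
  ultimately have "continuous_map (prod_topology I01 I01) I01 ?H"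
    by (auto simp: continuous_map_in_subtopology)
  then have "continuous_map (prod_topology I01 I01) X (p \<circ> ?H)"
    using continuous_map_compose p unfolding pathin_def by blast
  then show ?thesis
    unfolding phomotopic_def homotopic_with_def using e
    by (intro exI[of _ "p \<circ> ?H"]) (auto simp: algebra_simps)
qed

lemma phomotopic_reparam_eq:
  assumes "pathin X m"
    and "continuous_on {0..1} f" "f ` {0..1} \<subseteq> {0..1}"
    and "continuous_on {0..1} g" "g ` {0..1} \<subseteq> {0..1}"
    and "f 0 = g 0" "f 1 = g 1"
    and "\<And>t. t \<in> {0..1} \<Longrightarrow> a t = m (f t)"
    and "\<And>t. t \<in> {0..1} \<Longrightarrow> b t = m (g t)"
  shows "phomotopic X a b"
  using phomotopic_cong[OF phomotopic_reparam[of X m f g]] assms by auto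

lemma continuous_map_glue_halves:
  assumes H1: "continuous_map (prod_topology I01 I01) X H1"
    and H2: "continuous_map (prod_topology I01 I01) X H2"
    and e: "\<And>s. s \<in> {0..1} \<Longrightarrow> H1 (s, 1) = H2 (s, 0)"
  shows "continuous_map (prod_topology I01 I01) X
           (\<lambda>z. if snd z \<le> 1/2 then H1 (fst z, 2 * snd z) else H2 (fst z, 2 * snd z - 1))"
proof -
  let ?Z = "prod_topology I01 I01"
  have snd: "continuous_map ?Z euclideanreal snd"
    using continuous_map_snd[of I01 I01] by (simp add: continuous_map_in_subtopology)
  have rescale: "continuous_map (subtopology ?Z {z \<in> topspace ?Z. P (snd z)}) ?Z
      (\<lambda>z. (fst z, a * snd z + c))"
    if "\<And>t. t \<in> {0..1} \<Longrightarrow> P t \<Longrightarrow> a * t + c \<in> {0..1}" for P and a c :: real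
  proof (intro continuous_map_pairedI)
    show "continuous_map (subtopology ?Z {z \<in> topspace ?Z. P (snd z)}) I01 fst"
      by (rule continuous_map_from_subtopology[OF continuous_map_fst])
    have "continuous_map (subtopology ?Z {z \<in> topspace ?Z. P (snd z)}) euclideanreal
        (\<lambda>z. a * snd z + c)"
      by (intro continuous_intros continuous_map_from_subtopology[OF snd])
    then show "continuous_map (subtopology ?Z {z \<in> topspace ?Z. P (snd z)}) I01
        (\<lambda>z. a * snd z + c)"
      using that by (auto simp: continuous_map_in_subtopology)
  qed
  show ?thesis
  proof (rule continuous_map_cases_le)
    show "continuous_map ?Z euclideanreal snd" by (rule snd)
    show "continuous_map ?Z euclideanreal (\<lambda>z. 1/2)" by simp
    show "continuous_map (subtopology ?Z {z \<in> topspace ?Z. snd z \<le> 1/2}) X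
        (\<lambda>z. H1 (fst z, 2 * snd z))"
      using continuous_map_compose[OF rescale[of "\<lambda>t. t \<le> 1/2" 2 0] H1] by (simp add: o_def)
    show "continuous_map (subtopology ?Z {z \<in> topspace ?Z. 1/2 \<le> snd z}) X
        (\<lambda>z. H2 (fst z, 2 * snd z - 1))"
      using continuous_map_compose[OF rescale[of "\<lambda>t. 1/2 \<le> t" 2 "-1"] H2] by (simp add: o_def)
    fix z assume "z \<in> topspace ?Z" "snd z = 1/2"
    then have "2 * snd z = 1" "fst z \<in> {0..1}" by auto
    then show "H1 (fst z, 2 * snd z) = H2 (fst z, 2 * snd z - 1)" using e by simp
  qed
qed

lemma phomotopic_concat:
  assumes h1: "phomotopic X p p'" and h2: "phomotopic X q q'" and e: "p 1 = q 0"
  shows "phomotopic X (path_concat p q) (path_concat p' q')"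
proof -
  obtain H1 where H1: "continuous_map (prod_topology I01 I01) X H1"
    "\<And>x. H1 (0, x) = p x" "\<And>x. H1 (1, x) = p' x"
    "\<And>s. s \<in> {0..1} \<Longrightarrow> H1 (s, 0) = p 0 \<and> H1 (s, 1) = p 1"
    using h1 unfolding phomotopic_def homotopic_with_def by auto
  obtain H2 where H2: "continuous_map (prod_topology I01 I01) X H2"
    "\<And>x. H2 (0, x) = q x" "\<And>x. H2 (1, x) = q' x"
    "\<And>s. s \<in> {0..1} \<Longrightarrow> H2 (s, 0) = q 0 \<and> H2 (s, 1) = q 1"
    using h2 unfolding phomotopic_def homotopic_with_def by auto
  let ?K = "\<lambda>z. if snd z \<le> 1/2 then H1 (fst z, 2 * snd z) else H2 (fst z, 2 * snd z - 1)"
  have "continuous_map (prod_topology I01 I01) X ?K"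
    by (rule continuous_map_glue_halves[OF H1(1) H2(1)]) (use H1(4) H2(4) e in auto)
  then show ?thesis
    unfolding phomotopic_def homotopic_with_def using H1(4) H2(4)
    by (intro exI[of _ ?K]) (auto simp: H1(2,3) H2(2,3) path_concat_def)
qed

lemma pathin_concat:
  assumes "pathin X p" "pathin X q" "p 1 = q 0"
  shows "pathin X (path_concat p q)"
  using phomotopic_concat[OF phomotopic_refl phomotopic_refl] phomotopic_imp_pathin(1) assms
  by metis

lemma phomotopic_assoc:
  assumes p: "pathin X p" and q: "pathin X q" and r: "pathin X r"
    and e: "p 1 = q 0" "q 1 = r 0"
  shows "phomotopic X (path_concat (path_concat p q) r) (path_concat p (path_concat q r))"
proof (rule phomotopic_reparam_eq[where m = "path_concat (path_concat p q) r"
      and f = "\<lambda>t. t" and g = "\<lambda>t. max (t/2) (max (t - 1/4) (2*t - 1))"])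
  show "pathin X (path_concat (path_concat p q) r)"
    using p q r e by (intro pathin_concat) auto
  show "continuous_on {0..1} (\<lambda>t::real. max (t/2) (max (t - 1/4) (2*t - 1)))"
    by (intro continuous_intros) auto
  show "(\<lambda>t::real. max (t/2) (max (t - 1/4) (2*t - 1))) ` {0..1} \<subseteq> {0..1}"
    by (auto simp: max_def)
  fix t :: real
  consider "t \<le> 1/2" | "1/2 < t" "t \<le> 3/4" | "3/4 < t" by linarith
  then show "path_concat p (path_concat q r) t =
        path_concat (path_concat p q) r (max (t/2) (max (t - 1/4) (2*t - 1)))"
  proof cases
    case 1
    then have "max (t/2) (max (t - 1/4) (2*t - 1)) = t/2" by (auto simp: max_def)
    then show ?thesis using 1 by (simp add: path_concat_def)
  next
    case 2
    then have "max (t/2) (max (t - 1/4) (2*t - 1)) = t - 1/4" by (auto simp: max_def)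
    moreover have "2 * (2 * (t - 1/4)) - 1 = 2 * (2 * t - 1)" by (simp add: algebra_simps)
    ultimately show ?thesis using 2 by (simp add: path_concat_def)
  next
    case 3
    then have "max (t/2) (max (t - 1/4) (2*t - 1)) = 2 * t - 1" by (auto simp: max_def)
    then show ?thesis using 3 by (simp add: path_concat_def)
  qed
qed auto

lemma phomotopic_rid:
  assumes "pathin X p"
  shows "phomotopic X (path_concat p (\<lambda>t. p 1)) p"
proof (rule phomotopic_reparam_eq[where m = p and f = "\<lambda>t. min (2*t) 1" and g = "\<lambda>t. t"])
  show "continuous_on {0..1} (\<lambda>t::real. min (2*t) 1)" by (intro continuous_intros)
  show "path_concat p (\<lambda>t. p 1) t = p (min (2 * t) 1)" for t
    by (auto simp: path_concat_def min_def)
qed (use assms in \<open>auto simp: min_def\<close>)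

lemma phomotopic_lid:
  assumes "pathin X p"
  shows "phomotopic X (path_concat (\<lambda>t. p 0) p) p"
proof (rule phomotopic_reparam_eq[where m = p and f = "\<lambda>t. max 0 (2*t - 1)" and g = "\<lambda>t. t"])
  show "continuous_on {0..1} (\<lambda>t::real. max 0 (2*t - 1))" by (intro continuous_intros)
  show "path_concat (\<lambda>t. p 0) p t = p (max 0 (2 * t - 1))" for t
    by (cases "t \<le> 1/2") (simp_all add: path_concat_def)
qed (use assms in \<open>auto simp: max_def\<close>)

lemma phomotopic_rinv:
  assumes "pathin X p"
  shows "phomotopic X (path_concat p (path_reverse p)) (\<lambda>t. p 0)"
proof (rule phomotopic_reparam_eq[where m = p and f = "\<lambda>t. 1 - \<bar>2*t - 1\<bar>" and g = "\<lambda>t. 0"])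
  show "continuous_on {0..1} (\<lambda>t::real. 1 - \<bar>2*t - 1\<bar>)" by (intro continuous_intros)
  show "path_concat p (path_reverse p) t = p (1 - \<bar>2*t - 1\<bar>)" for t
  proof (cases "t \<le> 1/2")
    case True
    then have "1 - \<bar>2*t - 1\<bar> = 2 * t" by (simp add: abs_if)
    then show ?thesis using True by (simp add: path_concat_def)
  next
    case False
    then have "1 - \<bar>2*t - 1\<bar> = 1 - (2 * t - 1)" by (simp add: abs_if)
    then show ?thesis using False by (simp add: path_concat_def path_reverse_def)
  qed
qed (use assms in \<open>auto simp: abs_if\<close>)

lemma phomotopic_linv:
  assumes "pathin X p"
  shows "phomotopic X (path_concat (path_reverse p) p) (\<lambda>t. p 1)"
  using phomotopic_rinv[OF pathin_reverse[OF assms]] by simp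

lemma phomotopic_right_cancel:
  assumes p: "pathin X p" and q: "pathin X q" and r: "pathin X r"
    and e: "p 1 = r 0" "q 1 = r 0"
    and h: "phomotopic X (path_concat p r) (path_concat q r)"
  shows "phomotopic X p q"
proof -
  have r': "pathin X (path_reverse r)" using pathin_reverse[OF r] .
  have "phomotopic X p (path_concat p (path_concat r (path_reverse r)))"
    using phomotopic_sym[OF phomotopic_rid[OF p]]
      phomotopic_concat[OF phomotopic_refl[OF p] phomotopic_sym[OF phomotopic_rinv[OF r]]] e
    by (simp add: phomotopic_trans)
  also have "phomotopic X \<dots> (path_concat (path_concat p r) (path_reverse r))"
    using phomotopic_sym[OF phomotopic_assoc[OF p r r']] e by simp
  also have "phomotopic X \<dots> (path_concat (path_concat q r) (path_reverse r))"
    using phomotopic_concat[OF h phomotopic_refl[OF r']] by simp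
  also have "phomotopic X \<dots> (path_concat q (path_concat r (path_reverse r)))"
    using phomotopic_assoc[OF q r r'] e by simp
  also have "phomotopic X \<dots> q"
    using phomotopic_concat[OF phomotopic_refl[OF q] phomotopic_rinv[OF r]] phomotopic_rid[OF q] e
    by (simp add: phomotopic_trans)
  finally show ?thesis .
qed

lemma phomotopic_concat_null_iff:
  assumes d: "pathin X d" and u: "pathin X u" and e: "d 1 = u 0" "u 1 = d 0"
  shows "phomotopic X (path_concat d u) (\<lambda>t. d 0) \<longleftrightarrow> phomotopic X u (path_reverse d)"
proof
  have d': "pathin X (path_reverse d)" using pathin_reverse[OF d] .
  assume h: "phomotopic X (path_concat d u) (\<lambda>t. d 0)"
  have "phomotopic X u (path_concat (path_concat (path_reverse d) d) u)"
    using phomotopic_sym[OF phomotopic_lid[OF u]]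
      phomotopic_concat[OF phomotopic_sym[OF phomotopic_linv[OF d]] phomotopic_refl[OF u]] e
    by (simp add: phomotopic_trans)
  also have "phomotopic X \<dots> (path_concat (path_reverse d) (path_concat d u))"
    using phomotopic_assoc[OF d' d u] e by simp
  also have "phomotopic X \<dots> (path_reverse d)"
    using phomotopic_concat[OF phomotopic_refl[OF d'] h] phomotopic_rid[OF d']
    by (simp add: phomotopic_trans)
  finally show "phomotopic X u (path_reverse d)" .
next
  assume "phomotopic X u (path_reverse d)"
  then show "phomotopic X (path_concat d u) (\<lambda>t. d 0)"
    using phomotopic_concat[OF phomotopic_refl[OF d]] phomotopic_rinv[OF d] e
    by (metis phomotopic_trans)
qed

text \<open>The conjugated loop \<open>d \<cdot> g \<cdot> b\<^sup>- \<cdot> d\<^sup>-\<close> based at \<open>d 0\<close>; it is null-homotopic exactly when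
  \<open>g \<simeq> b\<close>.  This translates (non-)homotopy of paths into (non-)triviality in \<open>\<pi>\<^sub>1\<close>.\<close>
definition conj_loop :: "(real \<Rightarrow> 'a) \<Rightarrow> (real \<Rightarrow> 'a) \<Rightarrow> (real \<Rightarrow> 'a) \<Rightarrow> real \<Rightarrow> 'a" where
  "conj_loop d g b = path_concat d (path_concat g (path_concat (path_reverse b) (path_reverse d)))"

lemma pathin_conj_loop:
  assumes "pathin X d" "pathin X g" "pathin X b" "d 1 = g 0" "g 1 = b 1" "b 0 = d 1"
  shows "pathin X (conj_loop d g b)" "conj_loop d g b 0 = d 0" "conj_loop d g b 1 = d 0"
proof -
  have "pathin X (path_concat (path_reverse b) (path_reverse d))"
    by (rule pathin_concat) (use assms pathin_reverse in simp_all)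
  then have "pathin X (path_concat g (path_concat (path_reverse b) (path_reverse d)))"
    by (rule pathin_concat[OF assms(2)]) (use assms in simp)
  then show "pathin X (conj_loop d g b)"
    unfolding conj_loop_def by (rule pathin_concat[OF assms(1)]) (use assms in simp)
qed (simp_all add: conj_loop_def)

lemma conj_loop_null_iff:
  assumes d: "pathin X d" and g: "pathin X g" and b: "pathin X b"
    and e: "d 1 = b 0" "g 0 = b 0" "g 1 = b 1"
  shows "phomotopic X (conj_loop d g b) (\<lambda>t. d 0) \<longleftrightarrow> phomotopic X g b"
proof -
  define R where "R = path_concat (path_reverse b) (path_reverse d)"
  have b': "pathin X (path_reverse b)" and d': "pathin X (path_reverse d)"
    using pathin_reverse[OF b] pathin_reverse[OF d] .
  have R: "pathin X R" "R 0 = b 1" "R 1 = d 0"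
    using pathin_concat[OF b' d'] e by (simp_all add: R_def)
  have gR: "pathin X (path_concat g R)"
    using pathin_concat[OF g R(1)] R e by simp
  have bR: "phomotopic X (path_concat b R) (path_reverse d)"
  proof -
    have "phomotopic X (path_concat b R) (path_concat (path_concat b (path_reverse b)) (path_reverse d))"
      unfolding R_def using phomotopic_sym[OF phomotopic_assoc[OF b b' d']] e by simp
    also have "phomotopic X \<dots> (path_concat (\<lambda>t. b 0) (path_reverse d))"
      using phomotopic_concat[OF phomotopic_rinv[OF b] phomotopic_refl[OF d']] e by simp
    also have "phomotopic X \<dots> (path_reverse d)" using phomotopic_lid[OF d'] e by simp
    finally show ?thesis .
  qed
  have "phomotopic X (conj_loop d g b) (\<lambda>t. d 0) \<longleftrightarrow>
        phomotopic X (path_concat g R) (path_reverse d)"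
    unfolding conj_loop_def R_def[symmetric]
    by (rule phomotopic_concat_null_iff[OF d gR]) (use e R in simp_all)
  also have "\<dots> \<longleftrightarrow> phomotopic X (path_concat g R) (path_concat b R)"
    using phomotopic_trans[OF _ phomotopic_sym[OF bR]] phomotopic_trans[OF _ bR] by (rule iffI)
  also have "\<dots> \<longleftrightarrow> phomotopic X g b"
  proof
    have gb: "g 1 = R 0" "b 1 = R 0" using R(2) e(3) by simp_all
    assume "phomotopic X (path_concat g R) (path_concat b R)"
    from phomotopic_right_cancel[OF g b R(1) gb this] show "phomotopic X g b" .
  next
    assume "phomotopic X g b"
    from phomotopic_concat[OF this phomotopic_refl[OF R(1)]]
    show "phomotopic X (path_concat g R) (path_concat b R)" using R(2) e(3) by simp
  qed
  finally show ?thesis .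
qed

section \<open>The fundamental group\<close>

lemma pclass_eq:
  assumes "phomotopic X a b" shows "pclass X x a = pclass X x b"
  using assms phomotopic_trans phomotopic_sym unfolding pclass_def by blast

lemma pclass_self: "a \<in> loop_space_set X x \<Longrightarrow> a \<in> pclass X x a"
  by (auto simp: pclass_def loop_space_set_def intro: phomotopic_refl)

lemma pclass_eq_iff:
  assumes "a \<in> loop_space_set X x"
  shows "pclass X x a = pclass X x b \<longleftrightarrow> phomotopic X b a"
  using pclass_self[OF assms] pclass_eq[of X b a x] by (auto simp: pclass_def)

lemma loop_concat:
  "a \<in> loop_space_set X x \<Longrightarrow> b \<in> loop_space_set X x \<Longrightarrow> path_concat a b \<in> loop_space_set X x"
  using pathin_concat[of X a b] by (auto simp: loop_space_set_def)

lemma loop_reverse: "a \<in> loop_space_set X x \<Longrightarrow> path_reverse a \<in> loop_space_set X x"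
  using pathin_reverse[of X a] by (auto simp: loop_space_set_def)

lemma loop_const: "x \<in> topspace X \<Longrightarrow> (\<lambda>t. x) \<in> loop_space_set X x"
  by (auto simp: loop_space_set_def pathin_def)

lemma pi1_mult:
  assumes "a \<in> loop_space_set X x" "b \<in> loop_space_set X x"
  shows "pclass X x a \<otimes>\<^bsub>fundamental_group X x\<^esub> pclass X x b = pclass X x (path_concat a b)"
proof -
  have some: "(SOME c. c \<in> pclass X x a) \<in> pclass X x a" if "a \<in> loop_space_set X x" for a
    using pclass_self[OF that] by (rule someI[where P = "\<lambda>c. c \<in> pclass X x a"])
  let ?a = "SOME c. c \<in> pclass X x a" and ?b = "SOME c. c \<in> pclass X x b"
  have "phomotopic X (path_concat a b) (path_concat ?a ?b)"
    using some[OF assms(1)] some[OF assms(2)] assms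
    by (intro phomotopic_concat) (auto simp: loop_space_set_def pclass_def)
  then show ?thesis by (simp add: fundamental_group_def pclass_eq)
qed

lemma group_pi1:
  assumes x: "x \<in> topspace X"
  shows "group (fundamental_group X x)"
proof (rule groupI)
  fix A B assume "A \<in> carrier (fundamental_group X x)" "B \<in> carrier (fundamental_group X x)"
  then obtain a b where ab: "a \<in> loop_space_set X x" "b \<in> loop_space_set X x"
    "A = pclass X x a" "B = pclass X x b" by (auto simp: fundamental_group_def)
  then show "A \<otimes>\<^bsub>fundamental_group X x\<^esub> B \<in> carrier (fundamental_group X x)"
    using pi1_mult[OF ab(1,2)] loop_concat[OF ab(1,2)] by (simp add: fundamental_group_def)
next
  show "\<one>\<^bsub>fundamental_group X x\<^esub> \<in> carrier (fundamental_group X x)"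
    using loop_const[OF x] by (simp add: fundamental_group_def)
next
  fix A B C assume "A \<in> carrier (fundamental_group X x)" "B \<in> carrier (fundamental_group X x)"
    "C \<in> carrier (fundamental_group X x)"
  then obtain a b c where abc: "a \<in> loop_space_set X x" "b \<in> loop_space_set X x"
    "c \<in> loop_space_set X x" "A = pclass X x a" "B = pclass X x b" "C = pclass X x c"
    by (auto simp: fundamental_group_def)
  have "phomotopic X (path_concat (path_concat a b) c) (path_concat a (path_concat b c))"
    using abc by (intro phomotopic_assoc) (auto simp: loop_space_set_def)
  then show "A \<otimes>\<^bsub>fundamental_group X x\<^esub> B \<otimes>\<^bsub>fundamental_group X x\<^esub> C =
             A \<otimes>\<^bsub>fundamental_group X x\<^esub> (B \<otimes>\<^bsub>fundamental_group X x\<^esub> C)"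
    using abc by (simp add: pi1_mult loop_concat pclass_eq)
next
  fix A assume "A \<in> carrier (fundamental_group X x)"
  then obtain a where a: "a \<in> loop_space_set X x" "A = pclass X x a"
    by (auto simp: fundamental_group_def)
  then have "phomotopic X (path_concat (\<lambda>t. x) a) a"
    using phomotopic_lid[of X a] by (auto simp: loop_space_set_def)
  then show "\<one>\<^bsub>fundamental_group X x\<^esub> \<otimes>\<^bsub>fundamental_group X x\<^esub> A = A"
    using a pi1_mult[OF loop_const[OF x] a(1)] by (simp add: fundamental_group_def pclass_eq)
next
  fix A assume "A \<in> carrier (fundamental_group X x)"
  then obtain a where a: "a \<in> loop_space_set X x" "A = pclass X x a"
    by (auto simp: fundamental_group_def)
  then have "phomotopic X (path_concat (path_reverse a) a) (\<lambda>t. x)"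
    using phomotopic_linv[of X a] by (auto simp: loop_space_set_def)
  then have "pclass X x (path_reverse a) \<otimes>\<^bsub>fundamental_group X x\<^esub> A = \<one>\<^bsub>fundamental_group X x\<^esub>"
    using a pi1_mult[OF loop_reverse[OF a(1)] a(1)] by (simp add: fundamental_group_def pclass_eq)
  moreover have "pclass X x (path_reverse a) \<in> carrier (fundamental_group X x)"
    using loop_reverse[OF a(1)] by (simp add: fundamental_group_def)
  ultimately show "\<exists>y\<in>carrier (fundamental_group X x).
      y \<otimes>\<^bsub>fundamental_group X x\<^esub> A = \<one>\<^bsub>fundamental_group X x\<^esub>"
    by blast
qed

section \<open>Quotient and indiscrete topologies\<close>

lemma openin_quotient_topology:
  "openin (quotient_topology T f Y) U \<longleftrightarrow> U \<subseteq> Y \<and> openin T {z \<in> topspace T. f z \<in> U}"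
proof -
  have inter: "{z \<in> topspace T. f z \<in> S \<inter> R} = {z \<in> topspace T. f z \<in> S} \<inter> {z \<in> topspace T. f z \<in> R}"
    for S R by auto
  have union: "{z \<in> topspace T. f z \<in> \<Union>K} = (\<Union>S\<in>K. {z \<in> topspace T. f z \<in> S})" for K
    by auto
  have "istopology (\<lambda>U. U \<subseteq> Y \<and> openin T {z \<in> topspace T. f z \<in> U})"
    unfolding istopology_def inter union by (auto intro: openin_Int openin_Union)
  then show ?thesis by (simp add: quotient_topology_def)
qed

lemma topspace_quotient_topology:
  assumes "f ` topspace T \<subseteq> Y"
  shows "topspace (quotient_topology T f Y) = Y"
proof -
  have "{z \<in> topspace T. f z \<in> Y} = topspace T" using assms by auto
  then have "openin (quotient_topology T f Y) Y" by (simp add: openin_quotient_topology)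
  then show ?thesis
    using openin_subset openin_quotient_topology[of T f Y "topspace (quotient_topology T f Y)"]
    by blast
qed

text \<open>The indiscrete topology on a set; it witnesses that the group topologies used to define
  \<open>F_M\<close> form a nonempty family.\<close>
definition indiscrete_topology :: "'b set \<Rightarrow> 'b topology" where
  "indiscrete_topology C = topology (\<lambda>U. U = {} \<or> U = C)"

lemma openin_indiscrete_topology: "openin (indiscrete_topology C) U \<longleftrightarrow> U = {} \<or> U = C"
proof -
  have "\<Union>K = {} \<or> \<Union>K = C" if "\<forall>S\<in>K. S = {} \<or> S = C" for K
    using that by (cases "C \<in> K") blast+
  then have "istopology (\<lambda>U. U = {} \<or> U = C)" unfolding istopology_def by auto
  then show ?thesis by (simp add: indiscrete_topology_def)
qed

lemma topspace_indiscrete_topology: "topspace (indiscrete_topology C) = C"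
  unfolding topspace_def openin_indiscrete_topology by auto

lemma continuous_map_indiscrete_topology:
  "continuous_map Z (indiscrete_topology C) h \<longleftrightarrow> h ` topspace Z \<subseteq> C"
proof -
  have "{x \<in> topspace Z. h x \<in> C} = topspace Z" if "h ` topspace Z \<subseteq> C" using that by auto
  then show ?thesis
    unfolding continuous_map openin_indiscrete_topology topspace_indiscrete_topology by auto
qed

section \<open>The free topological group and the functor \<open>\<tau>\<close>\<close>

lemma topspace_free_top_group:
  "topspace (free_top_group_topology S) = carrier (free_group (topspace S))"
  and continuous_map_free_generator:
  "continuous_map S (free_top_group_topology S) (\<lambda>s. [(s, True)])"
proof -
  let ?F = "free_group (topspace S)" and ?i = "\<lambda>s. [(s, True)]"
  let ?\<O> = "\<Union>{{U. openin T U} | T. group_topology ?F T \<and> continuous_map S T ?i}"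
  have gen: "?i ` topspace S \<subseteq> carrier ?F"
    by (auto simp: free_group_def word_reduce.simps(2))
  have "group_topology ?F (indiscrete_topology (carrier ?F))"
    using monoid.m_closed[OF group.is_monoid[OF group_free_group]] group.inv_closed[OF group_free_group]
    unfolding group_topology_def topspace_indiscrete_topology continuous_map_indiscrete_topology
    by (auto simp: topspace_indiscrete_topology)
  moreover have "continuous_map S (indiscrete_topology (carrier ?F)) ?i"
    unfolding continuous_map_indiscrete_topology using gen .
  ultimately have "carrier ?F \<in> ?\<O>"
    by (blast intro: openin_indiscrete_topology[THEN iffD2])
  moreover have "U \<subseteq> carrier ?F" if "U \<in> ?\<O>" for U
    using that unfolding group_topology_def by (auto dest: openin_subset)
  ultimately have top: "\<Union>?\<O> = carrier ?F" by blast
  then show "topspace (free_top_group_topology S) = carrier ?F"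
    unfolding free_top_group_topology_def topology_generated_by_topspace by simp
  show "continuous_map S (free_top_group_topology S) ?i"
    unfolding free_top_group_topology_def continuous_on_generated_topo_iff
  proof (intro conjI allI impI)
    fix U assume "U \<in> ?\<O>"
    then obtain T where T: "continuous_map S T ?i" "openin T U" by blast
    have "?i -` U \<inter> topspace S = {x \<in> topspace S. ?i x \<in> U}" by auto
    then show "openin S (?i -` U \<inter> topspace S)"
      using openin_continuous_map_preimage[OF T] by simp
  qed (use top gen in simp)
qed

lemma word_eval_closed:
  assumes "group G" "fst ` set w \<subseteq> carrier G"
  shows "word_eval G w \<in> carrier G"
  using assms(2)
proof (induction w)
  case (Cons a w)
  then show ?case
    using group.is_monoid[OF assms(1)] group.inv_closed[OF assms(1)]
    by (cases a) (auto simp: word_eval_def intro: monoid.m_closed)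
qed (simp add: word_eval_def group.is_monoid[OF assms(1)] monoid.one_closed)

text \<open>\<open>\<tau>(G)\<close> lives on the carrier of \<open>G\<close> and is finer than the given topology: every
  open set of \<open>\<tau>(G)\<close> pulls back along the continuous generator map.\<close>
lemma topspace_tau_topology:
  assumes "group G" "topspace T = carrier G"
  shows "topspace (tau_topology G T) = carrier G"
  unfolding tau_topology_def
  by (rule topspace_quotient_topology)
    (auto simp: topspace_free_top_group free_group_def assms intro!: word_eval_closed[OF assms(1)])

lemma openin_tau_topology_imp_openin:
  assumes G: "group G" and T: "topspace T = carrier G" and V: "openin (tau_topology G T) V"
  shows "openin T V"
proof -
  let ?W = "{w \<in> carrier (free_group (carrier G)). word_eval G w \<in> V}"
  have V': "V \<subseteq> carrier G" "openin (free_top_group_topology T) ?W"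
    using V unfolding tau_topology_def openin_quotient_topology topspace_free_top_group T
    by auto
  have "word_eval G [(g, True)] = g" if "g \<in> carrier G" for g
    using monoid.r_one[OF group.is_monoid[OF G] that] by (simp add: word_eval_def)
  then have "{g \<in> topspace T. [(g, True)] \<in> ?W} = V"
    using V'(1) by (auto simp: T free_group_def word_reduce.simps(2))
  then show ?thesis
    using openin_continuous_map_preimage[OF continuous_map_free_generator V'(2)] by simp
qed

section \<open>The loop space and the topologies on \<open>\<pi>\<^sub>1\<close>\<close>

lemma topspace_loop_space: "topspace (loop_space X x) = loop_space_set X x"
proof -
  have "loop_space_set X x \<in> {{\<alpha> \<in> loop_space_set X x. \<alpha> ` K \<subseteq> U} | K U.
        compactin (top_of_set {0..1}) K \<and> openin X U}"
    by (rule CollectI, rule exI[of _ "{}"], rule exI[of _ "topspace X"]) auto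
  then show ?thesis unfolding loop_space_def topology_generated_by_topspace by blast
qed

lemma topspace_pi1_qtop: "topspace (pi1_qtop X x) = carrier (fundamental_group X x)"
  unfolding pi1_qtop_def
  by (rule topspace_quotient_topology) (auto simp: topspace_loop_space fundamental_group_def)

lemma openin_pi1_tau_imp_openin_loops:
  assumes x: "x \<in> topspace X" and V: "openin (pi1_tau X x) V"
  shows "openin (loop_space X x) {z \<in> loop_space_set X x. pclass X x z \<in> V}"
proof -
  have "openin (pi1_qtop X x) V"
    using openin_tau_topology_imp_openin[OF group_pi1[OF x] topspace_pi1_qtop] V
    by (simp add: pi1_tau_def)
  then show ?thesis
    unfolding pi1_qtop_def openin_quotient_topology topspace_loop_space by simp
qed

lemma topspace_pi1_tau:
  "x \<in> topspace X \<Longrightarrow> topspace (pi1_tau X x) = carrier (fundamental_group X x)"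
  unfolding pi1_tau_def by (rule topspace_tau_topology[OF group_pi1 topspace_pi1_qtop])

lemma pi1_tau_Hausdorff_separates:
  assumes x: "x \<in> topspace X" and H: "Hausdorff_space (pi1_tau X x)"
    and L: "L \<in> loop_space_set X x" and ess: "\<not> phomotopic X L (\<lambda>t. x)"
  shows "\<exists>N. openin (loop_space X x) N \<and> L \<in> N \<and> (\<forall>M\<in>N. \<not> phomotopic X M (\<lambda>t. x))"
proof -
  let ?one = "pclass X x (\<lambda>t. x)"
  have const: "(\<lambda>t. x) \<in> loop_space_set X x" by (rule loop_const[OF x])
  have "pclass X x L \<noteq> ?one"
    using ess pclass_eq_iff[OF const] phomotopic_sym by blast
  moreover have "pclass X x L \<in> topspace (pi1_tau X x)" "?one \<in> topspace (pi1_tau X x)"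
    using L const by (simp_all add: topspace_pi1_tau[OF x] fundamental_group_def)
  ultimately obtain V W where VW: "openin (pi1_tau X x) V" "openin (pi1_tau X x) W"
    "pclass X x L \<in> V" "?one \<in> W" "disjnt V W"
    using H unfolding Hausdorff_space_def by blast
  have "\<not> phomotopic X M (\<lambda>t. x)" if "M \<in> loop_space_set X x" "pclass X x M \<in> V" for M
    using that VW(4,5) pclass_eq[of X M "\<lambda>t. x" x] by (auto simp: disjnt_def)
  then show ?thesis
    using openin_pi1_tau_imp_openin_loops[OF x VW(1)] L VW(3)
    by (intro exI[of _ "{z \<in> loop_space_set X x. pclass X x z \<in> V}"]) simp
qed

section \<open>Neighbourhoods in the compact-open loop space\<close>

lemma generate_topology_on_nbhd:
  assumes "generate_topology_on \<S> W" "x \<in> W"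
  obtains \<F> where "finite \<F>" "\<F> \<subseteq> \<S>" "x \<in> \<Inter>\<F>" "\<Inter>\<F> \<subseteq> W"
proof -
  have "(arbitrary union_of finite' intersection_of (\<lambda>S. S \<in> \<S>)) W"
    using assms(1) by (simp add: generate_topology_on_eq)
  then obtain \<U> where \<U>: "\<And>T. T \<in> \<U> \<Longrightarrow> \<exists>\<F>. finite' \<F> \<and> \<F> \<subseteq> \<S> \<and> \<Inter>\<F> = T" "\<Union>\<U> = W"
    unfolding union_of_def intersection_of_def by auto
  then obtain T where T: "T \<in> \<U>" "x \<in> T" using assms(2) by blast
  then obtain \<F> where "finite \<F>" "\<F> \<subseteq> \<S>" "\<Inter>\<F> = T" using \<U>(1) by blast
  then show thesis using that T \<U>(2) by blast
qed

lemma loop_space_nbhd: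
  assumes N: "openin (loop_space X x) N" "L \<in> N"
  shows "\<exists>P. finite P \<and>
    (\<forall>(K, U) \<in> P. compact K \<and> K \<subseteq> {0..1} \<and> openin X U \<and> L ` K \<subseteq> U) \<and>
    (\<forall>M \<in> loop_space_set X x. (\<forall>(K, U) \<in> P. M ` K \<subseteq> U) \<longrightarrow> M \<in> N)"
proof -
  define sub where "sub = (\<lambda>(K, U). {\<alpha> \<in> loop_space_set X x. \<alpha> ` K \<subseteq> (U::'a set)})"
  define good where "good = (\<lambda>(K, U). compactin (top_of_set {0..1::real}) K \<and> openin X (U::'a set))"
  let ?\<S> = "{{\<alpha> \<in> loop_space_set X x. \<alpha> ` K \<subseteq> U} | K U.
              compactin (top_of_set {0..1}) K \<and> openin X U}"
  have "generate_topology_on ?\<S> N"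
    using N(1) unfolding loop_space_def openin_topology_generated_by_iff .
  then obtain \<F> where \<F>: "finite \<F>" "\<F> \<subseteq> ?\<S>" "L \<in> \<Inter>\<F>" "\<Inter>\<F> \<subseteq> N"
    by (rule generate_topology_on_nbhd[OF _ N(2)])
  have "?\<S> \<subseteq> sub ` Collect good"
  proof
    fix B assume "B \<in> ?\<S>"
    then obtain K U where "B = sub (K, U)" "good (K, U)" unfolding sub_def good_def by blast
    then show "B \<in> sub ` Collect good" by blast
  qed
  then obtain Q where Q: "Q \<subseteq> Collect good" "finite Q" "\<F> = sub ` Q"
    using finite_subset_image[OF \<F>(1)] \<F>(2) by (meson order_trans)
  have inQ: "(K, U) \<in> Q \<Longrightarrow> compact K \<and> K \<subseteq> {0..1} \<and> openin X U \<and> L ` K \<subseteq> U" for K U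
  proof -
    assume KU: "(K, U) \<in> Q"
    then have "L \<in> sub (K, U)" using Q(3) \<F>(3) by blast
    moreover have "good (K, U)" using KU Q(1) by blast
    ultimately show ?thesis by (simp add: sub_def good_def compactin_subtopology)
  qed
  have inN: "M \<in> N" if M: "M \<in> loop_space_set X x" "\<forall>(K, U) \<in> Q. M ` K \<subseteq> U" for M
  proof -
    have "M \<in> sub p" if "p \<in> Q" for p
      using bspec[OF M(2) that] M(1) by (cases p) (simp add: sub_def)
    then have "M \<in> \<Inter>\<F>" using Q(3) by blast
    then show "M \<in> N" using \<F>(4) by blast
  qed
  show ?thesis
  proof (intro exI[of _ Q] conjI ballI impI)
    fix p assume "p \<in> Q"
    then show "case p of (K, U) \<Rightarrow> compact K \<and> K \<subseteq> {0..1} \<and> openin X U \<and> L ` K \<subseteq> U"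
      using inQ by (cases p) simp
  qed (use Q(2) inN in simp_all)
qed

section \<open>Uniform partitions of the unit interval\<close>

definition partition_cell :: "nat \<Rightarrow> nat \<Rightarrow> real set" where
  "partition_cell k i = {real (i - 1) / real k..real i / real k}"

lemma partition_cell_subset: "i \<in> {1..k} \<Longrightarrow> partition_cell k i \<subseteq> {0..1}"
  by (auto simp: partition_cell_def divide_le_eq)

lemma partition_cell_diam:
  assumes "i \<in> {1..k}" "s \<in> partition_cell k i" "c \<in> partition_cell k i"
  shows "dist c s \<le> 1 / real k"
proof -
  have "real (i - 1) = real i - 1" using assms(1) by auto
  then show ?thesis using assms(2,3)
    by (auto simp: partition_cell_def dist_real_def diff_divide_distrib abs_le_iff)
qed

lemma partition_cell_cover:
  assumes "1 \<le> k" "s \<in> {0..1}"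
  obtains i where "i \<in> {1..k}" "s \<in> partition_cell k i"
proof (cases "s = 0")
  case True
  then show thesis using that[of 1] assms by (simp add: partition_cell_def)
next
  case False
  define c where "c = \<lceil>s * real k\<rceil>"
  have k: "real k > 0" using assms(1) by simp
  then have "0 < s * real k" "s * real k \<le> real k"
    using False assms(2) by (simp_all add: mult_left_le_one_le)
  then have c: "1 \<le> c" "c \<le> int k" "real_of_int c - 1 < s * real k" "s * real k \<le> real_of_int c"
    unfolding c_def using ceiling_correct[of "s * real k"] by (simp_all add: ceiling_le_iff)
  then have "nat c \<in> {1..k}" by auto
  moreover have "s \<in> partition_cell k (nat c)"
    using c k by (simp add: partition_cell_def of_nat_diff divide_le_eq le_divide_eq)
  ultimately show thesis by (rule that)
qed

lemma pathin_compact_margin: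
  assumes \<alpha>: "pathin X \<alpha>" and C: "compact C" "C \<subseteq> {0..1}" and U: "openin X U" "\<alpha> ` C \<subseteq> U"
  shows "\<exists>e>0. \<forall>s c. s \<in> {0..1} \<longrightarrow> c \<in> C \<longrightarrow> dist c s < e \<longrightarrow> \<alpha> s \<in> U"
proof -
  have "openin I01 {s \<in> {0..1}. \<alpha> s \<in> U}"
    using openin_continuous_map_preimage[OF \<alpha>[unfolded pathin_def] U(1)] by simp
  then obtain T where T: "open T" "{s \<in> {0..1}. \<alpha> s \<in> U} = T \<inter> {0..1}"
    by (auto simp: openin_open)
  have "C \<subseteq> T" using C(2) U(2) T(2) by blast
  then obtain e where "e > 0" "(\<Union>c\<in>C. ball c e) \<subseteq> T"
    using compact_subset_open_imp_ball_epsilon_subset[OF C(1) T(1)] by blast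
  show ?thesis
  proof (intro exI[of _ e] conjI allI impI)
    fix s c assume "s \<in> {0..1}" "c \<in> C" "dist c s < e"
    then have "s \<in> ball c e" by (simp add: dist_commute)
    then have "s \<in> T \<inter> {0..1}" using \<open>c \<in> C\<close> \<open>s \<in> {0..1}\<close> \<open>(\<Union>c\<in>C. ball c e) \<subseteq> T\<close> by blast
    then show "\<alpha> s \<in> U" using T(2) by blast
  qed (rule \<open>e > 0\<close>)
qed

lemma pathin_finite_compact_margin:
  assumes \<alpha>: "pathin X \<alpha>" and P: "finite P"
    "\<forall>(C, U) \<in> P. compact C \<and> C \<subseteq> {0..1} \<and> openin X U \<and> \<alpha> ` C \<subseteq> U"
  shows "\<exists>e>0. \<forall>p\<in>P. \<forall>s c. s \<in> {0..1} \<longrightarrow> c \<in> fst p \<longrightarrow> dist c s < e \<longrightarrow> \<alpha> s \<in> snd p"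
proof -
  have "\<forall>p\<in>P. \<exists>e>0. \<forall>s c. s \<in> {0..1} \<longrightarrow> c \<in> fst p \<longrightarrow> dist c s < e \<longrightarrow> \<alpha> s \<in> snd p"
    using pathin_compact_margin[OF \<alpha>] P(2) by (auto simp: case_prod_beta)
  then obtain e where e: "\<And>p. p \<in> P \<Longrightarrow> e p > 0"
    "\<And>p s c. p \<in> P \<Longrightarrow> s \<in> {0..1} \<Longrightarrow> c \<in> fst p \<Longrightarrow> dist c s < e p \<Longrightarrow> \<alpha> s \<in> snd p"
    by metis
  have "Min (insert 1 (e ` P)) > 0" "\<forall>p\<in>P. Min (insert 1 (e ` P)) \<le> e p"
    using P(1) e(1) by simp_all
  then show ?thesis using e(2) by (intro exI[of _ "Min (insert 1 (e ` P))"]) force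
qed

text \<open>Lebesgue-number argument: finitely many conditions \<open>\<alpha>(C) \<subseteq> U\<close> on compact parameter sets
  follow from conditions \<open>\<gamma>(cell\<^sub>i) \<subseteq> W\<^sub>i\<close> on a fine uniform partition, which \<open>\<alpha>\<close> satisfies.
  \<open>W\<^sub>i\<close> is the intersection of those \<open>U\<close> whose \<open>C\<close> meets the \<open>i\<close>-th cell.\<close>
lemma uniform_partition_refinement:
  assumes \<alpha>: "pathin X \<alpha>" and P: "finite P"
    "\<forall>(C, U) \<in> P. compact C \<and> C \<subseteq> {0..1} \<and> openin X U \<and> \<alpha> ` C \<subseteq> U"
  shows "\<exists>k W. 1 \<le> k \<and> (\<forall>i\<in>{1..k}. openin X (W i) \<and> \<alpha> ` partition_cell k i \<subseteq> W i) \<and>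
    (\<forall>\<gamma>. (\<forall>i\<in>{1..k}. \<gamma> ` partition_cell k i \<subseteq> W i) \<longrightarrow> (\<forall>(C, U)\<in>P. \<gamma> ` C \<subseteq> U))"
proof -
  obtain e where "e > 0"
    and e: "\<And>p s c. p \<in> P \<Longrightarrow> s \<in> {0..1} \<Longrightarrow> c \<in> fst p \<Longrightarrow> dist c s < e \<Longrightarrow> \<alpha> s \<in> snd p"
    using pathin_finite_compact_margin[OF \<alpha> P] by blast
  then obtain n where "inverse (real (Suc n)) < e" using reals_Archimedean by blast
  define k where "k = Suc n"
  have k: "1 \<le> k" "1 / real k < e" using \<open>inverse _ < e\<close> by (simp_all add: k_def inverse_eq_divide)
  define W where "W = (\<lambda>i. \<Inter>(insert (topspace X) (snd ` {p \<in> P. fst p \<inter> partition_cell k i \<noteq> {}})))"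
  have "openin X (W i) \<and> \<alpha> ` partition_cell k i \<subseteq> W i" if i: "i \<in> {1..k}" for i
  proof -
    have "openin X (W i)" unfolding W_def using P by (intro openin_Inter) auto
    moreover have "\<alpha> s \<in> W i" if s: "s \<in> partition_cell k i" for s
    proof -
      have "s \<in> {0..1}" using partition_cell_subset[OF i] s by blast
      moreover have "\<alpha> s \<in> snd p" if "p \<in> P" "c \<in> fst p" "c \<in> partition_cell k i" for p c
        using e[OF that(1) \<open>s \<in> {0..1}\<close> that(2)] partition_cell_diam[OF i s that(3)] k(2)
        by linarith
      ultimately show ?thesis
        using \<alpha> by (force simp: W_def pathin_def dest: continuous_map_image_subset_topspace)
    qed
    ultimately show ?thesis by blast
  qed
  moreover have "\<forall>\<gamma>. (\<forall>i\<in>{1..k}. \<gamma> ` partition_cell k i \<subseteq> W i) \<longrightarrow> (\<forall>(C, U)\<in>P. \<gamma> ` C \<subseteq> U)"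
  proof (intro allI impI ballI)
    fix \<gamma> p assume \<gamma>: "\<forall>i\<in>{1..k}. \<gamma> ` partition_cell k i \<subseteq> W i" and "p \<in> P"
    obtain C U where CU: "p = (C, U)" "(C, U) \<in> P" using \<open>p \<in> P\<close> by (cases p) simp
    have "\<gamma> s \<in> U" if s: "s \<in> C" for s
    proof -
      have "s \<in> {0..1}" using P(2) CU(2) s by blast
      then obtain i where i: "i \<in> {1..k}" "s \<in> partition_cell k i"
        using partition_cell_cover[OF k(1)] by blast
      then have "W i \<subseteq> U" using CU(2) s by (force simp: W_def)
      then show "\<gamma> s \<in> U" using \<gamma> i by blast
    qed
    then show "case p of (C, U) \<Rightarrow> \<gamma> ` C \<subseteq> U" using CU(1) by auto
  qed
  ultimately show ?thesis using k(1) by (intro exI[of _ k] exI[of _ W] conjI) simp_all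
qed

lemma conj_loop_middle:
  assumes "t \<in> {1/2..3/4}" "d 1 = g 0"
  shows "conj_loop d g b t = g (4 * t - 2)"
proof (cases "t = 1/2")
  case True
  show ?thesis using assms(2) unfolding True by (simp add: conj_loop_def path_concat_def)
next
  case False
  then have "t > 1/2" "2 * t - 1 \<le> 1/2" "2 * (2 * t - 1) = 4 * t - 2" using assms by auto
  then show ?thesis by (simp add: conj_loop_def path_concat_def)
qed

lemma conj_loop_outside:
  assumes "t \<notin> {1/2<..3/4}"
  shows "conj_loop d g b t = conj_loop d g' b t"
  using assms by (auto simp: conj_loop_def path_concat_def)

text \<open>Only the middle quarter of the conjugated loop depends on the middle path; the
  parameters of a set \<open>K\<close> lying there, rescaled to \<open>[0,1]\<close>:\<close>
definition middle_quarter :: "real set \<Rightarrow> real set" where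
  "middle_quarter K = (\<lambda>t. 4 * t - 2) ` (K \<inter> {1/2..3/4})"

lemma compact_middle_quarter:
  "compact K \<Longrightarrow> compact (middle_quarter K) \<and> middle_quarter K \<subseteq> {0..1}"
  unfolding middle_quarter_def
  by (auto intro!: compact_continuous_image compact_Int_closed continuous_intros)

lemma conj_loop_image_middle:
  assumes "d 1 = \<alpha> 0" "conj_loop d \<alpha> b ` K \<subseteq> U"
  shows "\<alpha> ` middle_quarter K \<subseteq> U"
  using assms conj_loop_middle[of _ d \<alpha> b] by (force simp: middle_quarter_def)

lemma conj_loop_image_transfer:
  assumes "d 1 = \<gamma> 0" "conj_loop d \<alpha> b ` K \<subseteq> U" "\<gamma> ` middle_quarter K \<subseteq> U"
  shows "conj_loop d \<gamma> b ` K \<subseteq> U"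
proof
  fix y assume "y \<in> conj_loop d \<gamma> b ` K"
  then obtain t where t: "t \<in> K" "y = conj_loop d \<gamma> b t" by blast
  show "y \<in> U"
  proof (cases "t \<in> {1/2<..3/4}")
    case True
    then have "y = \<gamma> (4 * t - 2)" "4 * t - 2 \<in> middle_quarter K"
      using t conj_loop_middle[of t d \<gamma> b] assms(1) by (auto simp: middle_quarter_def)
    then show ?thesis using assms(3) by blast
  next
    case False
    then show ?thesis using t assms(2) conj_loop_outside[of t d \<gamma> b \<alpha>] by auto
  qed
qed

lemma conj_loop_tube:
  assumes paths: "pathin X d" "pathin X \<alpha>" "pathin X b"
    and ends: "d 0 = x" "d 1 = \<alpha> 0" "\<alpha> 1 = b 1" "b 0 = \<alpha> 0"
    and N: "openin (loop_space X x) N" "conj_loop d \<alpha> b \<in> N"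
  shows "\<exists>k W. 1 \<le> k \<and> (\<forall>i\<in>{1..k}. openin X (W i) \<and> \<alpha> ` partition_cell k i \<subseteq> W i) \<and>
    (\<forall>\<gamma>. pathin X \<gamma> \<and> \<gamma> 0 = \<alpha> 0 \<and> \<gamma> 1 = \<alpha> 1 \<and> (\<forall>i\<in>{1..k}. \<gamma> ` partition_cell k i \<subseteq> W i)
          \<longrightarrow> conj_loop d \<gamma> b \<in> N)"
proof -
  obtain P where P: "finite P"
    "\<forall>(K, U) \<in> P. compact K \<and> K \<subseteq> {0..1} \<and> openin X U \<and> conj_loop d \<alpha> b ` K \<subseteq> U"
    "\<forall>M \<in> loop_space_set X x. (\<forall>(K, U) \<in> P. M ` K \<subseteq> U) \<longrightarrow> M \<in> N"
    using loop_space_nbhd[OF N] by (elim exE conjE)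
  define P' where "P' = (\<lambda>(K, U). (middle_quarter K, U)) ` P"
  have fin: "finite P'" using P(1) by (simp add: P'_def)
  have cond: "\<forall>(C, U) \<in> P'. compact C \<and> C \<subseteq> {0..1} \<and> openin X U \<and> \<alpha> ` C \<subseteq> U"
  proof
    fix q assume "q \<in> P'"
    then obtain K U where q: "q = (middle_quarter K, U)" and KU: "(K, U) \<in> P"
      by (auto simp: P'_def)
    then have "compact K" "openin X U" "conj_loop d \<alpha> b ` K \<subseteq> U" using P(2) by blast+
    then show "case q of (C, U) \<Rightarrow> compact C \<and> C \<subseteq> {0..1} \<and> openin X U \<and> \<alpha> ` C \<subseteq> U"
      using q compact_middle_quarter conj_loop_image_middle[of d \<alpha> b, OF ends(2)] by simp
  qed
  obtain k W where kW: "1 \<le> k"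
    "\<forall>i\<in>{1..k}. openin X (W i) \<and> \<alpha> ` partition_cell k i \<subseteq> W i"
    "\<forall>\<gamma>. (\<forall>i\<in>{1..k}. \<gamma> ` partition_cell k i \<subseteq> W i) \<longrightarrow> (\<forall>(C, U)\<in>P'. \<gamma> ` C \<subseteq> U)"
    using uniform_partition_refinement[OF paths(2) fin cond] by (elim exE conjE)
  have "conj_loop d \<gamma> b \<in> N"
    if \<gamma>: "pathin X \<gamma>" "\<gamma> 0 = \<alpha> 0" "\<gamma> 1 = \<alpha> 1" "\<forall>i\<in>{1..k}. \<gamma> ` partition_cell k i \<subseteq> W i" for \<gamma>
  proof -
    have "conj_loop d \<gamma> b ` K \<subseteq> U" if KU: "(K, U) \<in> P" for K U
    proof (rule conj_loop_image_transfer[of d \<gamma> \<alpha> b])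
      show "d 1 = \<gamma> 0" using ends(2) \<gamma>(2) by simp
      show "conj_loop d \<alpha> b ` K \<subseteq> U" using P(2) KU by blast
      have "(middle_quarter K, U) \<in> P'" using KU by (force simp: P'_def)
      then show "\<gamma> ` middle_quarter K \<subseteq> U" using kW(3) \<gamma>(4) by blast
    qed
    moreover have "conj_loop d \<gamma> b \<in> loop_space_set X x"
      using pathin_conj_loop[OF paths(1) \<gamma>(1) paths(3)] ends \<gamma>(2,3)
      by (simp add: loop_space_set_def)
    ultimately show ?thesis using P(3) by (auto simp: case_prod_beta)
  qed
  then show ?thesis using kW(1,2) by blast
qed

definition separating_partition ::
  "'a topology \<Rightarrow> (real \<Rightarrow> 'a) \<Rightarrow> (real \<Rightarrow> 'a) \<Rightarrow> nat \<Rightarrow> (nat \<Rightarrow> real) \<Rightarrow> (nat \<Rightarrow> 'a set) \<Rightarrow> bool"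
  where
  "separating_partition X \<alpha> \<beta> k t U \<longleftrightarrow> 1 \<le> k \<and> t 0 = 0 \<and> t k = 1 \<and>
     (\<forall>i\<in>{1..k}. t (i - 1) < t i \<and> openin X (U i) \<and> \<alpha> ` {t (i - 1)..t i} \<subseteq> U i) \<and>
     (\<forall>\<gamma>. pathin X \<gamma> \<and> (\<forall>i\<le>k. \<gamma> (t i) = \<alpha> (t i)) \<and> (\<forall>i\<in>{1..k}. \<gamma> ` {t (i - 1)..t i} \<subseteq> U i)
        \<longrightarrow> \<not> phomotopic X \<gamma> \<beta>)"

lemma homotopically_path_Hausdorff_iff:
  "homotopically_path_Hausdorff X \<longleftrightarrow>
    (\<forall>\<alpha> \<beta>. pathin X \<alpha> \<and> pathin X \<beta> \<and> \<alpha> 0 = \<beta> 0 \<and> \<alpha> 1 = \<beta> 1 \<and> \<not> phomotopic X \<alpha> \<beta> \<longrightarrow>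
       (\<exists>k t U. separating_partition X \<alpha> \<beta> k t U))"
  by (simp add: homotopically_path_Hausdorff_def separating_partition_def)

lemma separating_partition_from_nbhd:
  assumes paths: "pathin X \<delta>" "pathin X \<alpha>" "pathin X \<beta>"
    and ends: "\<delta> 0 = x" "\<delta> 1 = \<alpha> 0" "\<alpha> 0 = \<beta> 0" "\<alpha> 1 = \<beta> 1"
    and N: "openin (loop_space X x) N" "conj_loop \<delta> \<alpha> \<beta> \<in> N" "\<forall>M\<in>N. \<not> phomotopic X M (\<lambda>t. x)"
  shows "\<exists>k t U. separating_partition X \<alpha> \<beta> k t U"
proof -
  obtain k W where k: "1 \<le> k" and W: "\<forall>i\<in>{1..k}. openin X (W i) \<and> \<alpha> ` partition_cell k i \<subseteq> W i"
    and tube: "\<forall>\<gamma>. pathin X \<gamma> \<and> \<gamma> 0 = \<alpha> 0 \<and> \<gamma> 1 = \<alpha> 1 \<and>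
        (\<forall>i\<in>{1..k}. \<gamma> ` partition_cell k i \<subseteq> W i) \<longrightarrow> conj_loop \<delta> \<gamma> \<beta> \<in> N"
    using conj_loop_tube[OF paths ends(1,2,4) ends(3)[symmetric] N(1,2)] by (elim exE conjE)
  define t where "t = (\<lambda>i::nat. real i / real k)"
  have t: "t 0 = 0" "t k = 1" "\<And>i. i \<in> {1..k} \<Longrightarrow> t (i - 1) < t i"
    using k by (auto simp: t_def divide_strict_right_mono)
  have cell: "partition_cell k i = {t (i - 1)..t i}" for i by (simp add: partition_cell_def t_def)
  have "\<not> phomotopic X \<gamma> \<beta>"
    if \<gamma>: "pathin X \<gamma>" "\<forall>i\<le>k. \<gamma> (t i) = \<alpha> (t i)" "\<forall>i\<in>{1..k}. \<gamma> ` {t (i - 1)..t i} \<subseteq> W i" for \<gamma>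
  proof -
    have \<gamma>01: "\<gamma> 0 = \<alpha> 0" "\<gamma> 1 = \<alpha> 1"
      using \<gamma>(2)[rule_format, of 0] \<gamma>(2)[rule_format, of k] t by simp_all
    then have "conj_loop \<delta> \<gamma> \<beta> \<in> N" using tube \<gamma>(1,3) by (simp add: cell)
    then have "\<not> phomotopic X (conj_loop \<delta> \<gamma> \<beta>) (\<lambda>t. \<delta> 0)" using N(3) ends(1) by simp
    moreover have "\<delta> 1 = \<beta> 0" "\<gamma> 0 = \<beta> 0" "\<gamma> 1 = \<beta> 1" using \<gamma>01 ends by simp_all
    ultimately show ?thesis using conj_loop_null_iff[OF paths(1) \<gamma>(1) paths(3)] by simp
  qed
  then have "separating_partition X \<alpha> \<beta> k t W"
    using k t W by (auto simp: separating_partition_def cell)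
  then show ?thesis by blast
qed

theorem proposition3p22:
  fixes X :: "'a topology" and x0 :: 'a
  assumes pc: "path_connected_space X"
    and x0: "x0 \<in> topspace X"
    and H: "Hausdorff_space (pi1_tau X x0)"
  shows "homotopically_path_Hausdorff X"
  unfolding homotopically_path_Hausdorff_iff
proof (intro allI impI)
  fix \<alpha> \<beta> :: "real \<Rightarrow> 'a"
  assume "pathin X \<alpha> \<and> pathin X \<beta> \<and> \<alpha> 0 = \<beta> 0 \<and> \<alpha> 1 = \<beta> 1 \<and> \<not> phomotopic X \<alpha> \<beta>"
  then have \<alpha>: "pathin X \<alpha>" and \<beta>: "pathin X \<beta>" and ends: "\<alpha> 0 = \<beta> 0" "\<alpha> 1 = \<beta> 1"
    and ne: "\<not> phomotopic X \<alpha> \<beta>" by auto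
  have "\<exists>\<delta>. pathin X \<delta> \<and> \<delta> 0 = x0 \<and> \<delta> 1 = \<alpha> 0"
    using pc x0 path_start_in_topspace[OF \<alpha>] unfolding path_connected_space_def by blast
  then obtain \<delta> where \<delta>: "pathin X \<delta>" "\<delta> 0 = x0" "\<delta> 1 = \<alpha> 0" by blast
  have \<delta>\<beta>: "\<beta> 0 = \<delta> 1" using ends(1) \<delta>(3) by simp
  have "conj_loop \<delta> \<alpha> \<beta> \<in> loop_space_set X x0"
    using pathin_conj_loop[OF \<delta>(1) \<alpha> \<beta> \<delta>(3) ends(2) \<delta>\<beta>] \<delta>(2) by (simp add: loop_space_set_def)
  moreover have "\<not> phomotopic X (conj_loop \<delta> \<alpha> \<beta>) (\<lambda>t. x0)"
    using conj_loop_null_iff[OF \<delta>(1) \<alpha> \<beta> \<delta>\<beta>[symmetric] ends] ne \<delta>(2) by simp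
  ultimately obtain N where N: "openin (loop_space X x0) N" "conj_loop \<delta> \<alpha> \<beta> \<in> N"
    "\<forall>M\<in>N. \<not> phomotopic X M (\<lambda>t. x0)"
    using pi1_tau_Hausdorff_separates[OF x0 H] by blast
  then show "\<exists>k t U. separating_partition X \<alpha> \<beta> k t U"
    using separating_partition_from_nbhd[OF \<delta>(1) \<alpha> \<beta> \<delta>(2,3) ends] by blast
qed

end
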